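(* Let $s\geq k\geq 2$ be integers and let $T=T(s,k)$, of order $n=s+k+1$. Then $\mu_2(T)=\frac{3-\sqrt{5}}{2}$ and $\mu_{n-1}(T)=\frac{3+\sqrt{5}}{2}$.
   Context: For a graph $G$ on $n$ vertices, the Laplacian matrix is $L(G)=D(G)-A(G)$, with $D(G)$ the diagonal degree matrix and $A(G)$ the adjacency matrix; its eigenvalues are denoted $0=\mu_1(G)\leq\mu_2(G)\leq\cdots\leq\mu_n(G)$. For integers $1\leq k\leq s$, the spider $T(s,k)$ is the tree obtained from the star $K_{1,s}$ by extending $k$ of its $s$ rays by one extra edge each; it has $s+k+1$ vertices. *)

theory Defs
  imports Complex_Main "Jordan_Normal_Form.Char_Poly"
begin

(* A simple graph on vertex set {0..<n} given by a symmetric irreflexive adjacency predicate. *)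
definition laplacian :: "nat \<Rightarrow> (nat \<Rightarrow> nat \<Rightarrow> bool) \<Rightarrow> real mat" where
  "laplacian n adj = mat n n (\<lambda>(i,j).
     if i = j then real (card {v. v < n \<and> adj i v})
     else if adj i j then -1 else 0)"

(* Eigenvalues of a square matrix, listed with multiplicity in non-decreasing order:
   the unique sorted list whose linear factors multiply to the characteristic polynomial
   (exists for real symmetric matrices such as Laplacians). *)
definition sorted_eigenvalues :: "real mat \<Rightarrow> real list" where
  "sorted_eigenvalues M = (THE xs. sorted xs \<and> char_poly M = (\<Prod>x\<leftarrow>xs. [:-x, 1:]))"

(* mu_i(G), 1-based: 0 = mu_1 \<le> mu_2 \<le> ... \<le> mu_n *)
definition lap_eig :: "nat \<Rightarrow> (nat \<Rightarrow> nat \<Rightarrow> bool) \<Rightarrow> nat \<Rightarrow> real" where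
  "lap_eig n adj i = sorted_eigenvalues (laplacian n adj) ! (i - 1)"

(* Spider T(s,k): centre 0, ray vertices 1..s adjacent to 0, and for 1 \<le> i \<le> k the
   extra vertex s+i adjacent to ray vertex i.  Vertex set {0..<s+k+1}. *)
definition spider_edge :: "nat \<Rightarrow> nat \<Rightarrow> nat \<Rightarrow> nat \<Rightarrow> bool" where
  "spider_edge s k u v \<longleftrightarrow> (u = 0 \<and> 1 \<le> v \<and> v \<le> s) \<or> (1 \<le> u \<and> u \<le> k \<and> v = s + u)"

definition spider_adj :: "nat \<Rightarrow> nat \<Rightarrow> nat \<Rightarrow> nat \<Rightarrow> bool" where
  "spider_adj s k u v \<longleftrightarrow> spider_edge s k u v \<or> spider_edge s k v u"

end

theory Submission
  imports Defs
begin

(* Multiplying x I - L on the right by a lower triangular matrix E with polynomial entries and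
   det E = (x^2 - 3x + 1) (x - 1)^(k+1) makes it upper triangular; comparing determinants gives
     chi(x) (x - 1) = x (x^2 - 3x + 1)^(k-1) (x - 1)^(s-k) R(x),
     R(x) = (x - s - 1) (x^2 - 3x + 1) - k
   for the characteristic polynomial chi of L.  Let rho_minus < rho_plus be the roots of
   x^2 - 3x + 1.  R equals -k at both of them, s - k >= 0 at 1 and is positive for large x, so
   its roots lie in (rho_minus, 1], (1, rho_plus) and (rho_plus, oo).  Hence 0 is the only
   eigenvalue below rho_minus, exactly one eigenvalue exceeds rho_plus, and since k >= 2 both
   rho_minus and rho_plus are eigenvalues. *)

lemma proots_prod_linear_factors: "proots (\<Prod>x\<leftarrow>xs. [:-x, 1:]) = mset (xs :: 'a :: idom list)"
proof (induction xs)
  case (Cons a xs)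
  have "(\<Prod>x\<leftarrow>xs. [:-x, 1:]) \<noteq> 0"
    by (auto simp: prod_list_zero_iff)
  then show ?case
    using Cons.IH proots_linear_factor[of "-a"] by (simp add: proots_mult del: mult_pCons_left)
qed simp

lemma sorted_eigenvalues_eq_sort:
  assumes "char_poly M = (\<Prod>x\<leftarrow>xs. [:-x, 1:])"
  shows "sorted_eigenvalues M = sort xs"
  unfolding sorted_eigenvalues_def
proof (rule the_equality)
  have "(\<Prod>x\<leftarrow>sort xs. [:-x, 1:]) = (\<Prod>x\<leftarrow>xs. [:-x, 1:])"
    by (simp only: prod_mset_prod_list[symmetric] mset_map mset_sort)
  with assms show "sorted (sort xs) \<and> char_poly M = (\<Prod>x\<leftarrow>sort xs. [:-x, 1:])"
    by simp
next
  fix ys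
  assume "sorted ys \<and> char_poly M = (\<Prod>x\<leftarrow>ys. [:-x, 1:])"
  moreover from this have "mset ys = mset xs"
    using assms by (simp only: proots_prod_linear_factors[symmetric])
  ultimately show "ys = sort xs"
    by (simp add: properties_for_sort)
qed

lemma monic_eq_prod_linear_factors:
  fixes p :: "'a :: idom poly"
  assumes "monic p" "degree p = length xs" "distinct xs" "\<And>x. x \<in> set xs \<Longrightarrow> poly p x = 0"
  shows "p = (\<Prod>x\<leftarrow>xs. [:-x, 1:])"
proof (rule poly_eqI_degree_lead_coeff[where n = "degree p" and A = "set xs"])
  have "monic (\<Prod>x\<leftarrow>xs. [:-x, 1:])"
    by (rule monic_prod_list) auto
  then show "coeff p (degree p) = coeff (\<Prod>x\<leftarrow>xs. [:-x, 1:]) (degree p)"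
    using assms(1,2) degree_linear_factors[of uminus xs] by simp
  show "degree (\<Prod>x\<leftarrow>xs. [:-x, 1:]) \<le> degree p"
    using assms(2) degree_linear_factors[of uminus xs] by simp
  show "poly p z = poly (\<Prod>x\<leftarrow>xs. [:-x, 1:]) z" if "z \<in> set xs" for z
    using that assms(4) by (simp add: poly_prod_list prod_list_zero_iff)
  show "degree p \<le> card (set xs)"
    using assms(2,3) by (simp add: distinct_card)
qed simp

lemma nth_sort_spectrum:
  fixes z lo hi g :: "'a :: linorder"
  assumes "z < lo" "lo < hi" "\<forall>m \<in> set mid. lo < m \<and> m < hi" "hi < g" "1 \<le> j"
  defines "xs \<equiv> z # replicate j lo @ replicate j hi @ mid @ [g]"
  shows "sort xs ! 1 = lo" "sort xs ! (2 * j + length mid) = hi"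
proof -
  obtain i where j: "j = Suc i"
    using assms(5) by (cases j) auto
  define pre where "pre = z # lo # replicate i lo @ sort mid @ replicate i hi"
  have "sorted (pre @ [hi, g])"
    using assms(1-4) by (auto simp: pre_def sorted_append)
  moreover have "mset (pre @ [hi, g]) = mset xs"
    by (simp add: pre_def xs_def j)
  ultimately have sort_xs: "sort xs = pre @ [hi, g]"
    by (simp add: properties_for_sort)
  then show "sort xs ! 1 = lo"
    by (simp add: pre_def)
  have "length pre = 2 * j + length mid"
    by (simp add: pre_def j)
  then show "sort xs ! (2 * j + length mid) = hi"
    unfolding sort_xs using nth_append_length[of pre hi "[g]"] by simp
qed

definition neighbours :: "nat \<Rightarrow> (nat \<Rightarrow> nat \<Rightarrow> bool) \<Rightarrow> nat \<Rightarrow> nat set" where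
  "neighbours n adj i = {v. v < n \<and> adj i v}"

lemma laplacian_carrier [simp]: "laplacian n adj \<in> carrier_mat n n"
  by (simp add: laplacian_def)

lemma neg_char_matrix_laplacian:
  "- char_matrix (laplacian n adj) x = mat n n (\<lambda>(i,j).
     if i = j then x - real (card (neighbours n adj i)) else if adj i j then 1 else 0)"
  by (rule eq_matI) (auto simp: laplacian_def char_matrix_def neighbours_def)

lemma neg_char_matrix_laplacian_mult_entry:
  assumes "B \<in> carrier_mat n m" "a < n" "b < m" "\<not> adj a a"
  shows "(- char_matrix (laplacian n adj) x * B) $$ (a, b)
    = (x - real (card (neighbours n adj a))) * B $$ (a, b) + (\<Sum>v \<in> neighbours n adj a. B $$ (v, b))"
proof -
  let ?N = "neighbours n adj a"
  have "(- char_matrix (laplacian n adj) x * B) $$ (a, b)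
      = (\<Sum>v = 0..<n. (if v = a then (x - real (card ?N)) * B $$ (a, b) else 0)
                     + (if v \<in> ?N then B $$ (v, b) else 0))"
    using assms by (auto simp: neg_char_matrix_laplacian scalar_prod_def neighbours_def intro!: sum.cong)
  also have "\<dots> = (x - real (card ?N)) * B $$ (a, b) + (\<Sum>v \<in> {0..<n} \<inter> ?N. B $$ (v, b))"
    using assms(2) by (simp only: sum.distrib sum.inter_restrict[OF finite_atLeastLessThan]) simp
  also have "{0..<n} \<inter> ?N = ?N"
    by (auto simp: neighbours_def)
  finally show ?thesis .
qed

lemma spider_adj_iff:
  "spider_adj s k u v \<longleftrightarrow> (u = 0 \<and> 1 \<le> v \<and> v \<le> s) \<or> (v = 0 \<and> 1 \<le> u \<and> u \<le> s)
     \<or> (1 \<le> u \<and> u \<le> k \<and> v = s + u) \<or> (1 \<le> v \<and> v \<le> k \<and> u = s + v)"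
  unfolding spider_adj_def spider_edge_def by auto

lemma spider_neighbours:
  assumes "1 \<le> k" "k \<le> s" "a < s + k + 1"
  shows "neighbours (s + k + 1) (spider_adj s k) a =
    (if a = 0 then {1..s} else if a \<le> k then {0, s + a} else if a \<le> s then {0} else {a - s})"
  using assms by (auto simp: neighbours_def spider_adj_iff)

lemma spider_degree:
  assumes "1 \<le> k" "k \<le> s" "a < s + k + 1"
  shows "card (neighbours (s + k + 1) (spider_adj s k) a) = (if a = 0 then s else if a \<le> k then 2 else 1)"
  unfolding spider_neighbours[OF assms] by simp

definition spider_cubic :: "nat \<Rightarrow> nat \<Rightarrow> real poly" where
  "spider_cubic s k = [:-(real s + real k + 1), 3 * real s + 4, -(real s + 4), 1:]"

lemma poly_spider_cubic:
  "poly (spider_cubic s k) x = (x - real s - 1) * (x^2 - 3 * x + 1) - real k"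
  by (simp add: spider_cubic_def algebra_simps power2_eq_square)

(* Column 0 is annihilated by every row of x I - L except the centre's, and column b <= k
   combines the ray vertex b with its pendant vertex s + b. *)
definition spider_elim_mat :: "nat \<Rightarrow> nat \<Rightarrow> real \<Rightarrow> real mat" where
  "spider_elim_mat s k x = mat (s + k + 1) (s + k + 1) (\<lambda>(j, b).
     if b = 0 then
       (if j = 0 then (x^2 - 3 * x + 1) * (x - 1) else if j \<le> k then - ((x - 1)^2)
        else if j \<le> s then - (x^2 - 3 * x + 1) else x - 1)
     else if j = b then (if b \<le> k then x - 1 else 1)
     else if b \<le> k \<and> j = s + b then -1 else 0)"

lemma spider_elim_carrier: "spider_elim_mat s k x \<in> carrier_mat (s + k + 1) (s + k + 1)"
  by (simp add: spider_elim_mat_def)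

lemma det_spider_elim_mat:
  assumes "1 \<le> k"
  shows "det (spider_elim_mat s k x) = (x^2 - 3 * x + 1) * (x - 1) ^ (k + 1)"
proof -
  let ?E = "spider_elim_mat s k x"
  have "det ?E = (\<Prod>b = 0..<s + k + 1. ?E $$ (b, b))"
    by (subst det_lower_triangular[OF _ spider_elim_carrier])
      (auto simp: spider_elim_mat_def prod_list_diag_prod)
  also have "\<dots> = (\<Prod>b \<in> {0} \<union> {1..k} \<union> {k+1..<s+k+1}. ?E $$ (b, b))"
    by (rule prod.cong) auto
  also have "\<dots> = (x^2 - 3 * x + 1) * (x - 1) * (x - 1) ^ k"
    using assms by (subst prod.union_disjoint, auto)+ (auto simp: spider_elim_mat_def)
  finally show ?thesis by simp
qed

context
  fixes s k :: nat and x :: real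
  assumes k_pos: "1 \<le> k" and k_le_s: "k \<le> s"
begin

private abbreviation "M \<equiv> - char_matrix (laplacian (s + k + 1) (spider_adj s k)) x"
private abbreviation "E \<equiv> spider_elim_mat s k x"

lemma spider_elim_entry:
  assumes "a < s + k + 1" "b < s + k + 1"
  shows "(M * E) $$ (a, b) =
    (if a = 0 then (x - real s) * E $$ (0, b) + (\<Sum>v = 1..s. E $$ (v, b))
     else if a \<le> k then (x - 2) * E $$ (a, b) + E $$ (0, b) + E $$ (s + a, b)
     else if a \<le> s then (x - 1) * E $$ (a, b) + E $$ (0, b)
     else (x - 1) * E $$ (a, b) + E $$ (a - s, b))"
proof -
  have "\<not> spider_adj s k a a"
    using k_pos k_le_s by (auto simp: spider_adj_iff)
  from neg_char_matrix_laplacian_mult_entry[where adj = "spider_adj s k" and x = x,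
      OF spider_elim_carrier[of s k x] assms this]
  show ?thesis
    unfolding spider_neighbours[OF k_pos k_le_s assms(1)] spider_degree[OF k_pos k_le_s assms(1)]
    using k_pos k_le_s by (auto simp: algebra_simps)
qed

lemma spider_elim_centre: "(M * E) $$ (0, 0) = x * poly (spider_cubic s k) x"
proof -
  have "(\<Sum>v = 1..s. E $$ (v, 0))
      = real k * - ((x - 1)^2) + (real s - real k) * - (x^2 - 3 * x + 1)"
  proof -
    have "(\<Sum>v = 1..s. E $$ (v, 0)) = (\<Sum>v = 1..k. E $$ (v, 0)) + (\<Sum>v = k+1..s. E $$ (v, 0))"
      using k_le_s by (subst sum.union_disjoint[symmetric]) (auto intro: sum.cong)
    then show ?thesis
      using k_le_s by (simp add: spider_elim_mat_def of_nat_diff)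
  qed
  then show ?thesis
    by (subst spider_elim_entry) (simp_all add: spider_elim_mat_def poly_spider_cubic algebra_simps
      power2_eq_square)
qed

lemma spider_elim_kernel_column:
  assumes "0 < a" "a < s + k + 1"
  shows "(M * E) $$ (a, 0) = 0"
  using assms k_pos k_le_s
  by (subst spider_elim_entry) (auto simp: spider_elim_mat_def algebra_simps power2_eq_square)

lemma spider_elim_column:
  assumes "0 < b" "b \<le> a" "a < s + k + 1"
  shows "(M * E) $$ (a, b) = (if a = b then (if b \<le> k then x^2 - 3 * x + 1 else x - 1) else 0)"
  using assms k_pos k_le_s
  by (subst spider_elim_entry) (auto simp: spider_elim_mat_def algebra_simps power2_eq_square)

lemma spider_char_carrier: "M \<in> carrier_mat (s + k + 1) (s + k + 1)"
  by (rule uminus_carrier_mat[OF char_matrix_closed[OF laplacian_carrier]])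

lemma det_spider_char_mult_elim:
  "det (M * E) = x * poly (spider_cubic s k) x * (x^2 - 3 * x + 1) ^ k * (x - 1) ^ s"
proof -
  have carrier: "M * E \<in> carrier_mat (s + k + 1) (s + k + 1)"
    by (rule mult_carrier_mat[OF spider_char_carrier spider_elim_carrier])
  have "upper_triangular (M * E)"
    unfolding upper_triangular_def
  proof (intro allI impI)
    fix a b
    assume "a < dim_row (M * E)" "b < a"
    then show "(M * E) $$ (a, b) = 0"
      using carrier spider_elim_kernel_column spider_elim_column by (cases "b = 0") auto
  qed
  then have "det (M * E) = (\<Prod>a = 0..<s + k + 1. (M * E) $$ (a, a))"
    by (simp only: det_upper_triangular[OF _ carrier] prod_list_diag_prod carrier_matD(1)[OF carrier])
  also have "\<dots> = (\<Prod>a \<in> {0} \<union> {1..k} \<union> {k+1..<s+k+1}.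
      if a = 0 then x * poly (spider_cubic s k) x else if a \<le> k then x^2 - 3 * x + 1 else x - 1)"
    using spider_elim_centre spider_elim_column by (intro prod.cong) auto
  also have "\<dots> = x * poly (spider_cubic s k) x * (x^2 - 3 * x + 1) ^ k * (x - 1) ^ s"
    using k_pos k_le_s by (subst prod.union_disjoint, auto)+
  finally show ?thesis .
qed

lemma poly_char_poly_spider_scaled:
  "poly (char_poly (laplacian (s + k + 1) (spider_adj s k))) x * ((x^2 - 3 * x + 1) * (x - 1) ^ (k + 1))
     = x * poly (spider_cubic s k) x * (x^2 - 3 * x + 1) ^ k * (x - 1) ^ s"
proof -
  have "det (M * E) = det M * det E"
    by (rule det_mult[OF spider_char_carrier spider_elim_carrier])
  moreover have "poly (char_poly (laplacian (s + k + 1) (spider_adj s k))) x = det M"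
    by (rule char_poly_matrix[OF laplacian_carrier])
  ultimately show ?thesis
    using det_spider_char_mult_elim det_spider_elim_mat[OF k_pos] by simp
qed

end

lemma char_poly_spider:
  assumes "1 \<le> k" "k \<le> s"
  shows "char_poly (laplacian (s + k + 1) (spider_adj s k)) * [:-1, 1:]
    = [:0, 1:] * spider_cubic s k * [:1, -3, 1:] ^ (k - 1) * [:-1, 1:] ^ (s - k)"
proof -
  let ?\<chi> = "char_poly (laplacian (s + k + 1) (spider_adj s k))"
  let ?Q = "[:1, -3, 1:] :: real poly" and ?L = "[:-1, 1:] :: real poly"
  have "poly (?\<chi> * (?Q * ?L ^ (k + 1))) x = poly ([:0, 1:] * spider_cubic s k * ?Q ^ k * ?L ^ s) x" for x
    using poly_char_poly_spider_scaled[OF assms, of x] by (simp add: algebra_simps power2_eq_square)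
  then have "?\<chi> * (?Q * ?L ^ (k + 1)) = [:0, 1:] * spider_cubic s k * ?Q ^ k * ?L ^ s"
    by (simp add: poly_eq_poly_eq_iff[symmetric] fun_eq_iff del: poly_eq_poly_eq_iff)
  moreover have "?Q ^ k = ?Q ^ (k - 1) * ?Q"
    using assms by (intro power_minus_mult[symmetric]) simp
  moreover have "?L ^ s = ?L ^ (s - k) * ?L ^ k"
    using assms by (simp only: power_add[symmetric] le_add_diff_inverse2)
  moreover have "?L ^ (k + 1) = ?L * ?L ^ k"
    by (simp only: power_add power_one_right mult.commute)
  ultimately have "(?\<chi> * ?L) * (?Q * ?L ^ k)
      = ([:0, 1:] * spider_cubic s k * ?Q ^ (k - 1) * ?L ^ (s - k)) * (?Q * ?L ^ k)"
    by (simp only: ac_simps)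
  moreover have "?Q * ?L ^ k \<noteq> 0"
    by (intro no_zero_divisors power_not_zero) simp_all
  ultimately show ?thesis
    by (rule mult_right_cancel[THEN iffD1, rotated])
qed

definition rho_minus :: real where "rho_minus = (3 - sqrt 5) / 2"

definition rho_plus :: real where "rho_plus = (3 + sqrt 5) / 2"

lemma rho_bounds: "0 < rho_minus" "rho_minus < 1" "2 < rho_plus" "rho_plus < 3"
proof -
  have "2 < sqrt (5::real)" "sqrt (5::real) < 3"
    by (simp_all add: real_less_rsqrt real_less_lsqrt)
  then show "0 < rho_minus" "rho_minus < 1" "2 < rho_plus" "rho_plus < 3"
    by (simp_all add: rho_minus_def rho_plus_def)
qed

lemma rho_quadratic: "rho_minus^2 - 3 * rho_minus + 1 = 0" "rho_plus^2 - 3 * rho_plus + 1 = 0"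
  by (simp_all add: rho_minus_def rho_plus_def power2_eq_square field_simps)

lemma rho_factorization: "[:1, -3, 1:] = [:-rho_minus, 1:] * [:-rho_plus, 1:]"
proof -
  have "rho_minus + rho_plus = 3" "rho_minus * rho_plus = 1"
    by (simp_all add: rho_minus_def rho_plus_def field_simps)
  then show ?thesis
    by (simp add: mult.commute)
qed

lemma spider_cubic_monic: "monic (spider_cubic s k)" "degree (spider_cubic s k) = 3"
  by (simp_all add: spider_cubic_def)

lemma spider_cubic_at_rho:
  "poly (spider_cubic s k) rho_minus = - real k" "poly (spider_cubic s k) rho_plus = - real k"
  by (simp_all add: poly_spider_cubic rho_quadratic)

lemma spider_cubic_roots_unbalanced:
  assumes "1 \<le> k" "k < s"
  obtains a b g where "spider_cubic s k = (\<Prod>x\<leftarrow>[a, b, g]. [:-x, 1:])"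
    and "rho_minus < a" "a < 1" "1 < b" "b < rho_plus" "rho_plus < g"
proof -
  let ?R = "spider_cubic s k"
  have "poly ?R 1 = real s - real k"
    by (simp add: poly_spider_cubic)
  with assms have at_1: "0 < poly ?R 1"
    by simp
  have "poly ?R (real s + 4) = 3 * real s^2 + 15 * real s + 15 - real k"
    by (simp add: poly_spider_cubic power2_eq_square algebra_simps)
  moreover have "real k < 15 * real s + 15"
    using assms by simp
  ultimately have at_big: "0 < poly ?R (real s + 4)"
    using zero_le_power2[of "real s"] by linarith
  have at_rho: "poly ?R rho_minus < 0" "poly ?R rho_plus < 0"
    using assms by (simp_all add: spider_cubic_at_rho)
  obtain a where a: "rho_minus < a" "a < 1" "poly ?R a = 0"
    using poly_IVT_pos[OF rho_bounds(2) at_rho(1) at_1] by blast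
  obtain b where b: "1 < b" "b < rho_plus" "poly ?R b = 0"
    using poly_IVT_neg[OF _ at_1 at_rho(2)] rho_bounds(3) by auto
  obtain g where g: "rho_plus < g" "g < real s + 4" "poly ?R g = 0"
    using poly_IVT_pos[OF _ at_rho(2) at_big] rho_bounds(4) by auto
  have "?R = (\<Prod>x\<leftarrow>[a, b, g]. [:-x, 1:])"
    using a b g
    by (intro monic_eq_prod_linear_factors[OF spider_cubic_monic(1)]) (auto simp: spider_cubic_monic(2))
  with a b g show ?thesis
    by (intro that) auto
qed

lemma spider_cubic_roots_balanced:
  assumes "2 \<le> k"
  obtains b g where "spider_cubic k k = (\<Prod>x\<leftarrow>[1, b, g]. [:-x, 1:])"
    and "1 < b" "b < rho_plus" "rho_plus < g"
proof -
  define S where "S = [:2 * real k + 1, - (real k + 3), 1:]"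
  have poly_S: "poly S x = x^2 - (real k + 3) * x + 2 * real k + 1" for x
    by (simp add: S_def power2_eq_square algebra_simps)
  have R_S: "poly (spider_cubic k k) x = (x - 1) * poly S x" for x
    by (simp add: poly_spider_cubic poly_S power2_eq_square algebra_simps)
  have at_1: "0 < poly S 1"
    using assms by (simp add: poly_S)
  have "poly S rho_plus = real k * (2 - rho_plus)"
    using rho_quadratic(2) by (simp add: poly_S algebra_simps)
  then have at_rho: "poly S rho_plus < 0"
    using assms rho_bounds(3) by (simp add: mult_pos_neg)
  have at_big: "0 < poly S (real k + 3)"
    by (simp add: poly_S power2_eq_square algebra_simps)
  obtain b where b: "1 < b" "b < rho_plus" "poly S b = 0"
    using poly_IVT_neg[OF _ at_1 at_rho] rho_bounds(3) by auto
  obtain g where g: "rho_plus < g" "g < real k + 3" "poly S g = 0"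
    using poly_IVT_pos[OF _ at_rho at_big] rho_bounds(4) by auto
  have "spider_cubic k k = (\<Prod>x\<leftarrow>[1, b, g]. [:-x, 1:])"
    using b g
    by (intro monic_eq_prod_linear_factors[OF spider_cubic_monic(1)])
      (auto simp: spider_cubic_monic(2) R_S)
  with b g show ?thesis
    by (intro that) auto
qed

(* The factor x - 1 cancelled in char_poly_spider comes from (x - 1)^(s - k) if k < s and
   from the root 1 of the cubic if k = s. *)
lemma spider_cubic_ray_factor_split:
  assumes "2 \<le> k" "k \<le> s"
  obtains mid g where
    "[:-1, 1:] ^ (s - k) * spider_cubic s k = [:-1, 1:] * ((\<Prod>x\<leftarrow>mid. [:-x, 1:]) * [:-g, 1:])"
    "\<forall>m \<in> set mid. rho_minus < m \<and> m < rho_plus" "rho_plus < g" "length mid = s - k + 1"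
proof (cases "k < s")
  case True
  have "1 \<le> k"
    using assms(1) by simp
  then obtain a b g where R: "spider_cubic s k = (\<Prod>x\<leftarrow>[a, b, g]. [:-x, 1:])"
    and "rho_minus < a" "a < 1" "1 < b" "b < rho_plus" "rho_plus < g"
    using spider_cubic_roots_unbalanced[OF _ True] by blast
  have pow: "[:-1, 1:] ^ (s - k) = [:-1, 1:] * [:-1, 1:] ^ (s - k - 1)"
    using True by (simp only: power_Suc[symmetric] Suc_diff_Suc Suc_diff_1 zero_less_diff)
  have "[:-1, 1:] ^ (s - k) * spider_cubic s k
      = [:-1, 1:] * ((\<Prod>x\<leftarrow>replicate (s - k - 1) 1 @ [a, b]. [:-x, 1:]) * [:-g, 1:])"
    by (simp only: R pow map_append map_replicate prod_list.append prod_list_replicate list.map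
        prod_list.Cons prod_list.Nil mult_1_right ac_simps)
  then show ?thesis
    by (rule that) (use True rho_bounds \<open>rho_minus < a\<close> \<open>a < 1\<close> \<open>1 < b\<close> \<open>b < rho_plus\<close>
        \<open>rho_plus < g\<close> in auto)
next
  case False
  with assms have "s = k" by simp
  obtain b g where R: "spider_cubic k k = (\<Prod>x\<leftarrow>[1, b, g]. [:-x, 1:])"
    and "1 < b" "b < rho_plus" "rho_plus < g"
    using assms spider_cubic_roots_balanced by blast
  then have "[:-1, 1:] ^ (s - k) * spider_cubic s k
      = [:-1, 1:] * ((\<Prod>x\<leftarrow>[b]. [:-x, 1:]) * [:-g, 1:])"
    by (simp only: \<open>s = k\<close> diff_self_eq_0 power_0 mult_1_left R list.map prod_list.Cons
        prod_list.Nil mult_1_right ac_simps)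
  then show ?thesis
    by (rule that) (use \<open>s = k\<close> rho_bounds \<open>1 < b\<close> \<open>b < rho_plus\<close> \<open>rho_plus < g\<close> in auto)
qed

lemma char_poly_spider_linear_factors:
  assumes "2 \<le> k" "k \<le> s"
  obtains mid g where
    "char_poly (laplacian (s + k + 1) (spider_adj s k))
       = (\<Prod>x\<leftarrow>0 # replicate (k - 1) rho_minus @ replicate (k - 1) rho_plus @ mid @ [g]. [:-x, 1:])"
    "\<forall>m \<in> set mid. rho_minus < m \<and> m < rho_plus" "rho_plus < g" "length mid = s - k + 1"
proof -
  let ?\<chi> = "char_poly (laplacian (s + k + 1) (spider_adj s k))"
  obtain mid g where split:
      "[:-1, 1:] ^ (s - k) * spider_cubic s k = [:-1, 1:] * ((\<Prod>x\<leftarrow>mid. [:-x, 1:]) * [:-g, 1:])"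
    and bounds: "\<forall>m \<in> set mid. rho_minus < m \<and> m < rho_plus" "rho_plus < g" "length mid = s - k + 1"
    using spider_cubic_ray_factor_split[OF assms] by blast
  have "1 \<le> k"
    using assms(1) by simp
  from char_poly_spider[OF this assms(2)]
  have "?\<chi> * [:-1, 1:]
      = [:0, 1:] * [:1, -3, 1:] ^ (k - 1) * ([:-1, 1:] ^ (s - k) * spider_cubic s k)"
    by (simp only: ac_simps)
  also have "\<dots> = (\<Prod>x\<leftarrow>0 # replicate (k - 1) rho_minus @ replicate (k - 1) rho_plus @ mid @ [g].
      [:-x, 1:]) * [:-1, 1:]"
    unfolding split rho_factorization
    by (simp only: power_mult_distrib list.map map_append map_replicate prod_list.Cons prod_list.Nil
        prod_list.append prod_list_replicate minus_zero mult_1_left mult_1_right ac_simps)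
  finally show ?thesis
    using bounds by (intro that) (simp_all only: mult_right_cancel pCons_eq_0_iff one_neq_zero simp_thms)
qed

theorem lemma3p3:
  fixes s k n :: nat
  assumes "2 \<le> k" and "k \<le> s" and "n = s + k + 1"
  shows "lap_eig n (spider_adj s k) 2 = (3 - sqrt 5) / 2
       \<and> lap_eig n (spider_adj s k) (n - 1) = (3 + sqrt 5) / 2"
proof -
  obtain mid g where
    char_poly: "char_poly (laplacian n (spider_adj s k))
       = (\<Prod>x\<leftarrow>0 # replicate (k - 1) rho_minus @ replicate (k - 1) rho_plus @ mid @ [g]. [:-x, 1:])"
    and mid: "\<forall>m \<in> set mid. rho_minus < m \<and> m < rho_plus" and "rho_plus < g" "length mid = s - k + 1"
    using char_poly_spider_linear_factors[OF assms(1,2)] unfolding assms(3) by blast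
  have "rho_minus < rho_plus" "1 \<le> k - 1"
    using rho_bounds assms(1) by simp_all
  note spectrum = nth_sort_spectrum[OF rho_bounds(1) this(1) mid \<open>rho_plus < g\<close> this(2)]
  have "n - 1 - 1 = 2 * (k - 1) + length mid"
    using assms \<open>length mid = s - k + 1\<close> by simp
  then show ?thesis
    unfolding lap_eig_def sorted_eigenvalues_eq_sort[OF char_poly]
    using spectrum by (simp add: rho_minus_def rho_plus_def)
qed

end
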